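(* In a phase space $Z_2$, the instantaneous perturbation propagation problem (the linearized Euler system with initial data $(v_x',v_y',v_z',p')(\cdot,0)=I\in Z_2$) is well posed on every interval of time $[0,t_0]$, and the null solution is stable with respect to the class $Z_2$ of initial perturbations.
   Context: Fix constants $U_0,c_0,\rho_0>0$. Linearized Euler system: $\partial_t v_x' + U_0\partial_x v_x' + \frac1{\rho_0}\partial_x p' = 0$, $\partial_t v_y' + U_0\partial_x v_y' + \frac1{\rho_0}\partial_y p' = 0$, $\partial_t v_z' + U_0\partial_x v_z' + \frac1{\rho_0}\partial_z p' = 0$, $\partial_t p' + U_0\partial_xp' + \rho_0c_0^2(\partial_xv_x'+\partial_yv_y'+\partial_zv_z') = 0$. Phase space $Z_2$: fix real constants $k_i,l_i,m_i$ ($i=1,\dots,4$) with $k_1k_2k_3k_4\neq0$ and $\Delta = \frac{c_0\rho_0}{k_3k_4}[r_1(k_2k_3k_4+k_3m_2m_4+k_4l_2l_3) + r_2(k_1k_3k_4+k_3m_1m_4+k_4l_1l_3)]\neq0$, $r_i=\sqrt{k_i^2+l_i^2+m_i^2}$. With $\xi_i=k_ix+l_iy+m_iz$, $Z_2$ is the set of systems $I=(F,G,H,P)$ of bounded $C^1$ functions on $\mathbb{R}^3$ of the form $F = k_1f_1(\xi_1)+k_2f_2(\xi_2)+\frac{l_3}{k_3}f_3(\xi_3)+\frac{m_4}{k_4}f_4(\xi_4)$, $G = l_1f_1(\xi_1)+l_2f_2(\xi_2)-f_3(\xi_3)$, $H = m_1f_1(\xi_1)+m_2f_2(\xi_2)-f_4(\xi_4)$,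 $P = -c_0\rho_0r_1f_1(\xi_1)+c_0\rho_0r_2f_2(\xi_2)$ with $f_i:\mathbb{R}\to\mathbb{R}$ continuously differentiable, normed by $\|I\|_{Z_2}=\max\{\sup|F|,\sup|G|,\sup|H|,\sup|P|\}$. Well-posedness on $[0,t_0]$: (a) for every $I\in Z_2$ there is a unique solution with initial value $I$ defined for $t\in[0,t_0]$; (b) if $I_n\to I$ in $Z_2$ then the corresponding solutions converge in $Z_2$ to the solution for $I$ at every $t\in[0,t_0]$. Stability of the null solution: the problem is well posed on $[0,t_0]$ for every $t_0>0$ and for every $\varepsilon>0$ there is $\eta>0$ such that $\|I\|_{Z_2}<\eta$ implies $\|(v_x',v_y',v_z',p')(\cdot,t)\|_{Z_2}<\varepsilon$ for all $t\ge0$. *)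

theory Defs
  imports "HOL-Analysis.Analysis"
begin

text \<open>A scalar field on R^3 (arguments x y z), and a state (v_x', v_y', v_z', p').\<close>
type_synonym field = "real \<Rightarrow> real \<Rightarrow> real \<Rightarrow> real"
type_synonym state = "field \<times> field \<times> field \<times> field"

text \<open>Parameters k, l, m are indexed by 1..4.\<close>
definition rr :: "(nat \<Rightarrow> real) \<Rightarrow> (nat \<Rightarrow> real) \<Rightarrow> (nat \<Rightarrow> real) \<Rightarrow> nat \<Rightarrow> real" where
  "rr k l m i = sqrt ((k i)\<^sup>2 + (l i)\<^sup>2 + (m i)\<^sup>2)"

definition Delta :: "real \<Rightarrow> real \<Rightarrow> (nat \<Rightarrow> real) \<Rightarrow> (nat \<Rightarrow> real) \<Rightarrow> (nat \<Rightarrow> real) \<Rightarrow> real" where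
  "Delta c0 \<rho>0 k l m = c0 * \<rho>0 / (k 3 * k 4) *
     (rr k l m 1 * (k 2 * k 3 * k 4 + k 3 * m 2 * m 4 + k 4 * l 2 * l 3)
    + rr k l m 2 * (k 1 * k 3 * k 4 + k 3 * m 1 * m 4 + k 4 * l 1 * l 3))"

definition bounded_field :: "field \<Rightarrow> bool" where
  "bounded_field F \<longleftrightarrow> bounded (range (\<lambda>(x, y, z). F x y z))"

definition Z2 :: "real \<Rightarrow> real \<Rightarrow> (nat \<Rightarrow> real) \<Rightarrow> (nat \<Rightarrow> real) \<Rightarrow> (nat \<Rightarrow> real) \<Rightarrow> state set" where
  "Z2 c0 \<rho>0 k l m = {(F, G, H, P). bounded_field F \<and> bounded_field G \<and> bounded_field H \<and> bounded_field P \<and>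
     (\<exists>f :: nat \<Rightarrow> real \<Rightarrow> real.
        (\<forall>i\<in>{1..4}. f i C1_differentiable_on UNIV) \<and>
        (\<forall>x y z. let \<xi> = (\<lambda>i. k i * x + l i * y + m i * z) in
           F x y z = k 1 * f 1 (\<xi> 1) + k 2 * f 2 (\<xi> 2) + l 3 / k 3 * f 3 (\<xi> 3) + m 4 / k 4 * f 4 (\<xi> 4) \<and>
           G x y z = l 1 * f 1 (\<xi> 1) + l 2 * f 2 (\<xi> 2) - f 3 (\<xi> 3) \<and>
           H x y z = m 1 * f 1 (\<xi> 1) + m 2 * f 2 (\<xi> 2) - f 4 (\<xi> 4) \<and>
           P x y z = - c0 * \<rho>0 * rr k l m 1 * f 1 (\<xi> 1) + c0 * \<rho>0 * rr k l m 2 * f 2 (\<xi> 2)))}"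

definition supf :: "field \<Rightarrow> real" where
  "supf F = (SUP p \<in> UNIV. (case p of (x, y, z) \<Rightarrow> \<bar>F x y z\<bar>))"

definition znorm :: "state \<Rightarrow> real" where
  "znorm I = (case I of (F, G, H, P) \<Rightarrow> max (max (supf F) (supf G)) (max (supf H) (supf P)))"

definition zsub :: "state \<Rightarrow> state \<Rightarrow> state" where
  "zsub I J = (case I of (F, G, H, P) \<Rightarrow> case J of (F', G', H', P') \<Rightarrow>
     (\<lambda>x y z. F x y z - F' x y z, \<lambda>x y z. G x y z - G' x y z,
      \<lambda>x y z. H x y z - H' x y z, \<lambda>x y z. P x y z - P' x y z))"

definition comp :: "nat \<Rightarrow> state \<Rightarrow> field" where
  "comp j I = (case I of (F, G, H, P) \<Rightarrow> if j = 0 then F else if j = 1 then G else if j = 2 then H else P)"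

definition C1_partials :: "real \<Rightarrow> (real \<Rightarrow> real \<Rightarrow> real \<Rightarrow> real \<Rightarrow> real)
    \<Rightarrow> (nat \<Rightarrow> real \<Rightarrow> real \<Rightarrow> real \<Rightarrow> real \<Rightarrow> real) \<Rightarrow> bool" where
  "C1_partials t0 w d \<longleftrightarrow>
     (\<forall>x y z. \<forall>t\<in>{0..t0}.
        ((\<lambda>s. w s y z t) has_real_derivative d 0 x y z t) (at x) \<and>
        ((\<lambda>s. w x s z t) has_real_derivative d 1 x y z t) (at y) \<and>
        ((\<lambda>s. w x y s t) has_real_derivative d 2 x y z t) (at z) \<and>
        ((\<lambda>s. w x y z s) has_real_derivative d 3 x y z t) (at t within {0..t0})) \<and>
     continuous_on (UNIV \<times> UNIV \<times> UNIV \<times> {0..t0}) (\<lambda>(x, y, z, t). w x y z t) \<and>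
     (\<forall>a<4. continuous_on (UNIV \<times> UNIV \<times> UNIV \<times> {0..t0}) (\<lambda>(x, y, z, t). d a x y z t))"

definition is_solution :: "real \<Rightarrow> real \<Rightarrow> real \<Rightarrow> state set \<Rightarrow> real \<Rightarrow> state \<Rightarrow> (real \<Rightarrow> state) \<Rightarrow> bool" where
  "is_solution U0 c0 \<rho>0 Z t0 I u \<longleftrightarrow>
     u 0 = I \<and> (\<forall>t\<in>{0..t0}. u t \<in> Z) \<and>
     (\<exists>D :: nat \<Rightarrow> nat \<Rightarrow> real \<Rightarrow> real \<Rightarrow> real \<Rightarrow> real \<Rightarrow> real.
        (\<forall>j<4. C1_partials t0 (\<lambda>x y z t. comp j (u t) x y z) (D j)) \<and>
        (\<forall>x y z. \<forall>t\<in>{0..t0}.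
           D 0 3 x y z t + U0 * D 0 0 x y z t + 1 / \<rho>0 * D 3 0 x y z t = 0 \<and>
           D 1 3 x y z t + U0 * D 1 0 x y z t + 1 / \<rho>0 * D 3 1 x y z t = 0 \<and>
           D 2 3 x y z t + U0 * D 2 0 x y z t + 1 / \<rho>0 * D 3 2 x y z t = 0 \<and>
           D 3 3 x y z t + U0 * D 3 0 x y z t
             + \<rho>0 * c0\<^sup>2 * (D 0 0 x y z t + D 1 1 x y z t + D 2 2 x y z t) = 0))"

definition well_posed :: "real \<Rightarrow> real \<Rightarrow> real \<Rightarrow> state set \<Rightarrow> real \<Rightarrow> bool" where
  "well_posed U0 c0 \<rho>0 Z t0 \<longleftrightarrow>
     (\<forall>I\<in>Z. (\<exists>u. is_solution U0 c0 \<rho>0 Z t0 I u) \<and>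
        (\<forall>u v. is_solution U0 c0 \<rho>0 Z t0 I u \<longrightarrow> is_solution U0 c0 \<rho>0 Z t0 I v \<longrightarrow>
           (\<forall>t\<in>{0..t0}. u t = v t))) \<and>
     (\<forall>In I un u. (\<forall>n. In n \<in> Z) \<longrightarrow> I \<in> Z \<longrightarrow>
        (\<lambda>n. znorm (zsub (In n) I)) \<longlonglongrightarrow> 0 \<longrightarrow>
        (\<forall>n. is_solution U0 c0 \<rho>0 Z t0 (In n) (un n)) \<longrightarrow> is_solution U0 c0 \<rho>0 Z t0 I u \<longrightarrow>
        (\<forall>t\<in>{0..t0}. (\<lambda>n. znorm (zsub (un n t) (u t))) \<longlonglongrightarrow> 0))"

definition null_stable :: "real \<Rightarrow> real \<Rightarrow> real \<Rightarrow> state set \<Rightarrow> bool" where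
  "null_stable U0 c0 \<rho>0 Z \<longleftrightarrow>
     (\<forall>t0>0. well_posed U0 c0 \<rho>0 Z t0) \<and>
     (\<forall>\<epsilon>>0. \<exists>\<eta>>0. \<forall>I\<in>Z. znorm I < \<eta> \<longrightarrow>
        (\<forall>t0>0. \<forall>u. is_solution U0 c0 \<rho>0 Z t0 I u \<longrightarrow> (\<forall>t\<in>{0..t0}. znorm (u t) < \<epsilon>)))"

end

theory Submission
  imports Defs
begin

text \<open>
  A state of \<open>Z\<^sub>2\<close> is a superposition of four plane waves \<open>f\<^sub>i(\<xi>\<^sub>i)\<close>, and the
  coefficient vector of the \<open>i\<close>-th wave is an eigenvector of the symbol of the linearised
  Euler operator in the direction \<open>(k\<^sub>i, l\<^sub>i, m\<^sub>i)\<close>. Hence, with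
  \<open>\<omega>\<^sub>1 = c\<^sub>0 r\<^sub>1 - U\<^sub>0 k\<^sub>1\<close>, \<open>\<omega>\<^sub>2 = -c\<^sub>0 r\<^sub>2 - U\<^sub>0 k\<^sub>2\<close> and
  \<open>\<omega>\<^sub>i = -U\<^sub>0 k\<^sub>i\<close> for \<open>i = 3, 4\<close>, shifting every profile to \<open>f\<^sub>i(\<xi>\<^sub>i + \<omega>\<^sub>i t)\<close>
  gives a classical solution that stays in \<open>Z\<^sub>2\<close>.

  Conversely, \<open>\<Delta> \<noteq> 0\<close> makes the four coefficient vectors independent, so the \<open>i\<close>-th
  profile is read off from a state by a linear functional. For any classical solution,
  this functional evaluated on the line \<open>\<xi>\<^sub>i = a\<close>, \<open>y = z = 0\<close> gives a function
  \<open>h(a, t)\<close> with \<open>h\<^sub>t = \<omega>\<^sub>i h\<^sub>a\<close>, because the equations express the time derivatives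
  through the spatial ones and the solution stays in \<open>Z\<^sub>2\<close> at every time.
  So \<open>h(a, t) = h(a + \<omega>\<^sub>i t, 0)\<close>: every solution is the shifted wave.

  Shifting preserves the sup norms of the profiles, and these are equivalent to the
  \<open>Z\<^sub>2\<close>-norm of the state, so the solution operator is bounded uniformly in time.
\<close>

section \<open>Sup norms of states\<close>

lemma sum_atLeastAtMost_1_4: "(\<Sum>i\<in>{1..4::nat}. F i) = F 1 + F 2 + F 3 + F 4"
  by (simp add: eval_nat_numeral atLeastAtMostSuc_conv add_ac)

lemma sum_lessThan_4: "(\<Sum>j<(4::nat). F j) = F 0 + F 1 + F 2 + F 3"
  by (simp add: eval_nat_numeral add_ac)

lemma abs_le_supf: "bounded_field F \<Longrightarrow> \<bar>F x y z\<bar> \<le> supf F"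
proof -
  assume "bounded_field F"
  then obtain B where B: "\<And>p. p \<in> range (\<lambda>(x, y, z). F x y z) \<Longrightarrow> norm p \<le> B"
    unfolding bounded_field_def bounded_iff by blast
  have "\<bar>F x y z\<bar> \<le> B" for x y z
    using B[of "F x y z"] by (metis (mono_tags) UNIV_I case_prod_conv image_eqI real_norm_def)
  then have "bdd_above ((\<lambda>p. case p of (x, y, z) \<Rightarrow> \<bar>F x y z\<bar>) ` UNIV)"
    by (intro bdd_aboveI[of _ B]) auto
  then show ?thesis unfolding supf_def
    using cSUP_upper[of "(x, y, z)" UNIV "\<lambda>p. case p of (x, y, z) \<Rightarrow> \<bar>F x y z\<bar>"] by simp
qed

lemma supf_le: "(\<And>x y z. \<bar>F x y z\<bar> \<le> B) \<Longrightarrow> supf F \<le> B"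
  unfolding supf_def by (rule cSUP_least) auto

lemma bounded_fieldI: "(\<And>x y z. \<bar>F x y z\<bar> \<le> B) \<Longrightarrow> bounded_field F"
  unfolding bounded_field_def bounded_iff by auto

lemma abs_comp_le_znorm:
  assumes "\<forall>j<4. bounded_field (comp j I)" and "j < 4"
  shows "\<bar>comp j I x y z\<bar> \<le> znorm I"
proof -
  obtain F G H P where I: "I = (F, G, H, P)" by (cases I) auto
  have "j = 0 \<or> j = 1 \<or> j = 2 \<or> j = 3" using assms(2) by auto
  moreover have "bounded_field F" "bounded_field G" "bounded_field H" "bounded_field P"
    using assms(1) by (auto simp: I comp_def dest: spec[of _ 0] spec[of _ 1] spec[of _ 2] spec[of _ 3])
  ultimately show ?thesis
    by (auto simp: I comp_def znorm_def intro: abs_le_supf[THEN order_trans])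
qed

lemma znorm_le: "(\<And>j x y z. j < 4 \<Longrightarrow> \<bar>comp j I x y z\<bar> \<le> B) \<Longrightarrow> znorm I \<le> B"
proof -
  assume bound: "\<And>j x y z. j < 4 \<Longrightarrow> \<bar>comp j I x y z\<bar> \<le> B"
  obtain F G H P where I: "I = (F, G, H, P)" by (cases I) auto
  have "supf F \<le> B" "supf G \<le> B" "supf H \<le> B" "supf P \<le> B"
    using bound[of 0] bound[of 1] bound[of 2] bound[of 3] by (auto simp: I comp_def intro!: supf_le)
  then show ?thesis by (simp add: znorm_def I)
qed

lemma znorm_nonneg: "\<forall>j<4. bounded_field (comp j I) \<Longrightarrow> 0 \<le> znorm I"
  using abs_comp_le_znorm[of I 0 0 0 0] by auto

lemma comp_zsub: "comp j (zsub I J) x y z = comp j I x y z - comp j J x y z"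
  by (cases I; cases J) (simp add: zsub_def comp_def)

lemma bounded_comp_zsub:
  assumes "\<forall>j<4. bounded_field (comp j I)" and "\<forall>j<4. bounded_field (comp j J)"
  shows "\<forall>j<4. bounded_field (comp j (zsub I J))"
proof (intro allI impI)
  fix j :: nat assume "j < 4"
  then have "\<bar>comp j (zsub I J) x y z\<bar> \<le> znorm I + znorm J" for x y z
    using abs_comp_le_znorm[OF assms(1), of j x y z] abs_comp_le_znorm[OF assms(2), of j x y z]
    unfolding comp_zsub by linarith
  then show "bounded_field (comp j (zsub I J))" by (rule bounded_fieldI)
qed

section \<open>Differentiation and transport along characteristics\<close>

lemma DERIV_compose_UNIV:
  assumes "\<And>a. (g has_real_derivative g' a) (at a)"
    and "(f has_real_derivative f') (at x within A)"
    and "D = g' (f x) * f'"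
  shows "((\<lambda>x. g (f x)) has_real_derivative D) (at x within A)"
  using DERIV_chain2[OF assms(1) assms(2)] assms(3) by simp

lemma C1_differentiable_on_UNIV_deriv:
  fixes f :: "real \<Rightarrow> real"
  assumes "f C1_differentiable_on UNIV"
  shows "(f has_real_derivative deriv f x) (at x)" and "continuous_on UNIV (deriv f)"
proof -
  obtain D where D: "\<And>x. (f has_real_derivative D x) (at x)" and "continuous_on UNIV D"
    using assms unfolding C1_differentiable_on_def has_real_derivative_iff_has_vector_derivative by blast
  moreover have "deriv f = D" using D by (auto intro: DERIV_imp_deriv)
  ultimately show "(f has_real_derivative deriv f x) (at x)" and "continuous_on UNIV (deriv f)"
    by simp_all
qed

lemma continuous_on_sum_plane_waves:
  fixes g :: "nat \<Rightarrow> real \<Rightarrow> real"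
  assumes "\<And>i. i \<in> I \<Longrightarrow> continuous_on UNIV (g i)"
  shows "continuous_on A (\<lambda>(x, y, z, t). \<Sum>i\<in>I. C i * g i (k i * x + l i * y + m i * z + s i * t))"
  unfolding case_prod_unfold
  by (intro continuous_on_sum continuous_on_mult_left continuous_on_compose2[OF assms, of _ A]
      continuous_intros) auto

lemma C1_partials_on_x_axis:
  assumes C1: "C1_partials T w d" and c: "c \<noteq> 0"
  shows "t \<in> {0..T} \<Longrightarrow> ((\<lambda>s. w (s / c) 0 0 t) has_real_derivative d 0 (s / c) 0 0 t / c) (at s)"
    and "t \<in> {0..T} \<Longrightarrow> ((\<lambda>t. w x 0 0 t) has_real_derivative d 3 x 0 0 t) (at t within {0..T})"
    and "continuous_on (UNIV \<times> {0..T}) (\<lambda>(s, t). d 3 (s / c) 0 0 t)"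
proof -
  assume "t \<in> {0..T}"
  then have "((\<lambda>s. w s 0 0 t) has_real_derivative d 0 (s / c) 0 0 t) (at (s / c))"
    using C1 unfolding C1_partials_def by blast
  moreover have "((\<lambda>s. s / c) has_real_derivative 1 / c) (at s)"
    using c by (auto intro!: derivative_eq_intros)
  ultimately show "((\<lambda>s. w (s / c) 0 0 t) has_real_derivative d 0 (s / c) 0 0 t / c) (at s)"
    using DERIV_chain2 by fastforce
next
  assume "t \<in> {0..T}"
  then show "((\<lambda>t. w x 0 0 t) has_real_derivative d 3 x 0 0 t) (at t within {0..T})"
    using C1 unfolding C1_partials_def by blast
next
  have "continuous_on (UNIV \<times> UNIV \<times> UNIV \<times> {0..T}) (\<lambda>(x, y, z, t). d 3 x y z t)"
    using C1 unfolding C1_partials_def by auto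
  moreover have "continuous_on (UNIV \<times> {0..T}) (\<lambda>p. (fst p / c, 0::real, 0::real, snd p))"
    using c by (intro continuous_intros) auto
  ultimately show "continuous_on (UNIV \<times> {0..T}) (\<lambda>(s, t). d 3 (s / c) 0 0 t)"
    by (rule continuous_on_compose2[THEN continuous_on_eq]) (auto simp: case_prod_unfold)
qed

lemma has_derivative_from_partials:
  fixes h ha ht :: "real \<Rightarrow> real \<Rightarrow> real"
  assumes ha: "\<And>a t. t \<in> {0..T} \<Longrightarrow> ((\<lambda>a. h a t) has_real_derivative ha a t) (at a)"
    and ht: "\<And>a t. t \<in> {0..T} \<Longrightarrow> ((\<lambda>t. h a t) has_real_derivative ht a t) (at t within {0..T})"
    and cont: "continuous_on (UNIV \<times> {0..T}) (\<lambda>(a, t). ht a t)"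
    and t: "t \<in> {0..T}"
  shows "((\<lambda>(a, t). h a t) has_derivative (\<lambda>(da, dt). ha a t * da + ht a t * dt))
           (at (a, t) within UNIV \<times> {0..T})"
proof -
  have "((\<lambda>(a, t). h a t) has_derivative
      (\<lambda>(da, dt). ha a t * da + blinfun_apply (blinfun_mult_left (ht a t)) dt)) (at (a, t) within UNIV \<times> {0..T})"
  proof (rule has_derivative_partialsI)
    show "((\<lambda>a. h a t) has_derivative (\<lambda>da. ha a t * da)) (at a within UNIV)"
      using ha[OF t] by (simp add: has_field_derivative_def)
    show "((\<lambda>t. h a t) has_derivative blinfun_apply (blinfun_mult_left (ht a t))) (at t within {0..T})"
      if "t \<in> {0..T}" for a t
      by (rule has_derivative_eq_rhs[OF ht[OF that, unfolded has_field_derivative_def]])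
        (simp add: fun_eq_iff mult.commute)
    have "continuous (at (a, t) within UNIV \<times> {0..T}) (\<lambda>(a, t). ht a t)"
      using cont t by (simp add: continuous_on_eq_continuous_within)
    from bounded_linear.continuous[OF bounded_linear_blinfun_mult_left this]
    show "continuous (at (a, t) within UNIV \<times> {0..T}) (\<lambda>(a, t). blinfun_mult_left (ht a t))"
      by (simp add: case_prod_unfold)
  qed (use t in auto)
  then show ?thesis by (simp add: mult.commute)
qed

lemma transport_eq_initial_value:
  fixes h ha ht :: "real \<Rightarrow> real \<Rightarrow> real"
  assumes ha: "\<And>a t. t \<in> {0..T} \<Longrightarrow> ((\<lambda>a. h a t) has_real_derivative ha a t) (at a)"
    and ht: "\<And>a t. t \<in> {0..T} \<Longrightarrow> ((\<lambda>t. h a t) has_real_derivative ht a t) (at t within {0..T})"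
    and cont: "continuous_on (UNIV \<times> {0..T}) (\<lambda>(a, t). ht a t)"
    and transport: "\<And>a t. t \<in> {0..T} \<Longrightarrow> ht a t = s * ha a t"
    and t: "t \<in> {0..T}"
  shows "h a t = h (a + s * t) 0"
proof -
  have joint: "((\<lambda>(a, t). h a t) has_derivative (\<lambda>(da, dt). ha (fst p) (snd p) * da + ht (fst p) (snd p) * dt))
      (at p within UNIV \<times> {0..T})" if "p \<in> UNIV \<times> {0..T}" for p
    using has_derivative_from_partials[OF ha ht cont, of "snd p" "fst p"] that by auto
  define \<phi> where "\<phi> = (\<lambda>\<tau>. h (a + s * (t - \<tau>)) \<tau>)"
  have "(\<phi> has_derivative (\<lambda>_. 0)) (at \<tau> within {0..t})" if \<tau>: "\<tau> \<in> {0..t}" for \<tau>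
  proof -
    let ?p = "a + s * (t - \<tau>)"
    have \<tau>T: "\<tau> \<in> {0..T}" using \<tau> t by auto
    have line: "((\<lambda>\<tau>. (a + s * (t - \<tau>), \<tau>)) has_derivative (\<lambda>d. (- (s * d), d))) (at \<tau> within {0..t})"
      by (auto intro!: derivative_eq_intros)
    have "(\<lambda>\<tau>. (a + s * (t - \<tau>), \<tau>)) ` {0..t} \<subseteq> UNIV \<times> {0..T}"
      using t by auto
    from has_derivative_in_compose2[OF joint this \<tau> line]
    have "(\<phi> has_derivative (\<lambda>d. ha ?p \<tau> * - (s * d) + ht ?p \<tau> * d)) (at \<tau> within {0..t})"
      by (simp add: \<phi>_def)
    moreover have "(\<lambda>d. ha ?p \<tau> * - (s * d) + ht ?p \<tau> * d) = (\<lambda>_. 0)"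
      using transport[OF \<tau>T] by (auto simp: fun_eq_iff algebra_simps)
    ultimately show ?thesis by simp
  qed
  from has_derivative_zero_constant[OF convex_real_interval(5) this]
  obtain c where "\<forall>\<tau>\<in>{0..t}. \<phi> \<tau> = c" by blast
  then have "\<phi> t = \<phi> 0" using t by auto
  then show ?thesis by (simp add: \<phi>_def)
qed

section \<open>Plane-wave decomposition of the phase space\<close>

locale linearized_euler =
  fixes U0 c0 \<rho>0 :: real and k l m :: "nat \<Rightarrow> real"
  assumes k_nonzero: "k 1 * k 2 * k 3 * k 4 \<noteq> 0"
    and Delta_nonzero: "Delta c0 \<rho>0 k l m \<noteq> 0"
begin

abbreviation "r \<equiv> rr k l m"

definition "\<alpha> = l 3 / k 3"

definition "\<beta> = m 4 / k 4"

definition "\<mu> i = k i + l i * \<alpha> + m i * \<beta>"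

definition "impedance = c0 * \<rho>0"

definition "\<delta> = r 2 * \<mu> 1 + r 1 * \<mu> 2"

lemma k_nonzero_at: "i \<in> {1..4} \<Longrightarrow> k i \<noteq> 0"
  using k_nonzero by (auto simp: eval_nat_numeral le_Suc_eq)

lemma Delta_eq: "Delta c0 \<rho>0 k l m = impedance * \<delta>"
  using k_nonzero unfolding Delta_def \<delta>_def \<mu>_def \<alpha>_def \<beta>_def impedance_def
  by (simp add: field_simps)

lemma impedance_nonzero: "impedance \<noteq> 0" and \<delta>_nonzero: "\<delta> \<noteq> 0"
  using Delta_nonzero Delta_eq by auto

lemma rho0_nonzero: "\<rho>0 \<noteq> 0"
  using impedance_nonzero by (simp add: impedance_def)

text \<open>Column \<open>i\<close> holds the amplitudes of \<open>(v\<^sub>x', v\<^sub>y', v\<^sub>z', p')\<close> in the \<open>i\<close>-th plane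
  wave of \<open>Z\<^sub>2\<close>.\<close>

definition pol :: "nat \<Rightarrow> nat \<Rightarrow> real" where
  "pol j i =
    (if j = 0 then (if i = 1 then k 1 else if i = 2 then k 2 else if i = 3 then \<alpha> else \<beta>)
     else if j = 1 then (if i = 1 then l 1 else if i = 2 then l 2 else if i = 3 then -1 else 0)
     else if j = 2 then (if i = 1 then m 1 else if i = 2 then m 2 else if i = 3 then 0 else -1)
     else (if i = 1 then - impedance * r 1 else if i = 2 then impedance * r 2 else 0))"

text \<open>A left inverse of \<open>pol\<close> on the span of its columns; its denominator \<open>\<delta>\<close> is where
  \<open>\<Delta> \<noteq> 0\<close> is needed.\<close>

definition coord :: "nat \<Rightarrow> (nat \<Rightarrow> real) \<Rightarrow> real" where
  "coord i v =
    (let s = v 0 + \<alpha> * v 1 + \<beta> * v 2; p = v 3 / impedance;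
         c1 = (r 2 * s - \<mu> 2 * p) / \<delta>; c2 = (r 1 * s + \<mu> 1 * p) / \<delta>
     in if i = 1 then c1 else if i = 2 then c2
        else if i = 3 then l 1 * c1 + l 2 * c2 - v 1
        else m 1 * c1 + m 2 * c2 - v 2)"

lemma coord_superposition:
  assumes "i \<in> {1..4}"
  shows "coord i (\<lambda>j. \<Sum>i'\<in>{1..4}. pol j i' * a i') = a i"
proof -
  let ?v = "\<lambda>j. \<Sum>i'\<in>{1..4}. pol j i' * a i'"
  have s: "?v 0 + \<alpha> * ?v 1 + \<beta> * ?v 2 = \<mu> 1 * a 1 + \<mu> 2 * a 2"
    unfolding sum_atLeastAtMost_1_4 pol_def \<mu>_def by (simp add: algebra_simps)
  have p: "?v 3 / impedance = - r 1 * a 1 + r 2 * a 2"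
    unfolding sum_atLeastAtMost_1_4 pol_def using impedance_nonzero by (simp add: field_simps)
  have "r 2 * (\<mu> 1 * a 1 + \<mu> 2 * a 2) - \<mu> 2 * (- r 1 * a 1 + r 2 * a 2) = a 1 * \<delta>"
   and "r 1 * (\<mu> 1 * a 1 + \<mu> 2 * a 2) + \<mu> 1 * (- r 1 * a 1 + r 2 * a 2) = a 2 * \<delta>"
    unfolding \<delta>_def by (simp_all add: algebra_simps)
  then have c1: "(r 2 * (\<mu> 1 * a 1 + \<mu> 2 * a 2) - \<mu> 2 * (- r 1 * a 1 + r 2 * a 2)) / \<delta> = a 1"
   and c2: "(r 1 * (\<mu> 1 * a 1 + \<mu> 2 * a 2) + \<mu> 1 * (- r 1 * a 1 + r 2 * a 2)) / \<delta> = a 2"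
    using \<delta>_nonzero by simp_all
  have "?v 1 = l 1 * a 1 + l 2 * a 2 - a 3" "?v 2 = m 1 * a 1 + m 2 * a 2 - a 4"
    unfolding sum_atLeastAtMost_1_4 pol_def by simp_all
  moreover have "i = 1 \<or> i = 2 \<or> i = 3 \<or> i = 4" using assms by auto
  ultimately show ?thesis
    unfolding coord_def Let_def s p c1 c2 by auto
qed

definition coord_coeff :: "nat \<Rightarrow> nat \<Rightarrow> real" where
  "coord_coeff i j = coord i (\<lambda>j'. if j' = j then 1 else 0)"

lemma coord_eq_sum: "coord i v = (\<Sum>j<4. coord_coeff i j * v j)"
  using impedance_nonzero \<delta>_nonzero
  unfolding coord_coeff_def coord_def Let_def sum_lessThan_4
  by (auto simp: field_simps)

lemma coord_cong: "(\<And>j. j < 4 \<Longrightarrow> v j = w j) \<Longrightarrow> coord i v = coord i w"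
  by (simp add: coord_eq_sum)

lemma coord_divide_right: "coord i (\<lambda>j. v j / c) = coord i v / c"
  unfolding coord_eq_sum by (simp add: sum_divide_distrib)

lemma DERIV_coord:
  assumes "\<And>j. j < 4 \<Longrightarrow> ((\<lambda>s. W j s) has_real_derivative W' j) (at s within A)"
  shows "((\<lambda>s. coord i (\<lambda>j. W j s)) has_real_derivative coord i W') (at s within A)"
  unfolding coord_eq_sum by (auto intro!: DERIV_sum DERIV_cmult assms)

lemma continuous_on_coord:
  assumes "\<And>j. j < 4 \<Longrightarrow> continuous_on S (W j)"
  shows "continuous_on S (\<lambda>p. coord i (\<lambda>j. W j p))"
  unfolding coord_eq_sum by (intro continuous_on_sum continuous_on_mult_left assms) simp

definition phase :: "nat \<Rightarrow> real \<Rightarrow> real \<Rightarrow> real \<Rightarrow> real" where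
  "phase i x y z = k i * x + l i * y + m i * z"

definition wave_comp :: "nat \<Rightarrow> (nat \<Rightarrow> real \<Rightarrow> real) \<Rightarrow> field" where
  "wave_comp j g x y z = (\<Sum>i\<in>{1..4}. pol j i * g i (phase i x y z))"

definition wave :: "(nat \<Rightarrow> real \<Rightarrow> real) \<Rightarrow> state" where
  "wave g = (wave_comp 0 g, wave_comp 1 g, wave_comp 2 g, wave_comp 3 g)"

lemma comp_wave: "j < 4 \<Longrightarrow> comp j (wave g) = wave_comp j g"
  by (auto simp: comp_def wave_def eval_nat_numeral less_Suc_eq)

lemma coord_comp_wave: "coord i (\<lambda>j. comp j (wave g) x y z) = coord i (\<lambda>j. wave_comp j g x y z)"
  by (rule coord_cong) (simp add: comp_wave)

lemma wave_cong: "(\<And>i. i \<in> {1..4} \<Longrightarrow> g i = g' i) \<Longrightarrow> wave g = wave g'"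
  unfolding wave_def wave_comp_def by (intro prod_eqI ext sum.cong) auto

lemma zsub_wave: "zsub (wave g) (wave g') = wave (\<lambda>i a. g i a - g' i a)"
  by (simp add: zsub_def wave_def wave_comp_def sum_subtractf right_diff_distrib fun_eq_iff)

lemma coord_wave: "i \<in> {1..4} \<Longrightarrow> coord i (\<lambda>j. wave_comp j g (a / k i) 0 0) = g i a"
  using coord_superposition[of i "\<lambda>i'. g i' (phase i' (a / k i) 0 0)"] k_nonzero_at[of i]
  by (simp add: wave_comp_def phase_def)

lemma mem_Z2_iff:
  "I \<in> Z2 c0 \<rho>0 k l m \<longleftrightarrow>
     (\<forall>j<4. bounded_field (comp j I)) \<and> (\<exists>f. (\<forall>i\<in>{1..4}. f i C1_differentiable_on UNIV) \<and> I = wave f)"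
proof -
  obtain F G H P where I: "I = (F, G, H, P)" by (cases I) auto
  have all4: "(\<forall>j<4. Q j) \<longleftrightarrow> Q 0 \<and> Q 1 \<and> Q 2 \<and> Q 3" for Q :: "nat \<Rightarrow> bool"
    by (auto simp: eval_nat_numeral less_Suc_eq)
  have eq: "(\<forall>x y z. let \<xi> = (\<lambda>i. k i * x + l i * y + m i * z) in
           F x y z = k 1 * f 1 (\<xi> 1) + k 2 * f 2 (\<xi> 2) + l 3 / k 3 * f 3 (\<xi> 3) + m 4 / k 4 * f 4 (\<xi> 4) \<and>
           G x y z = l 1 * f 1 (\<xi> 1) + l 2 * f 2 (\<xi> 2) - f 3 (\<xi> 3) \<and>
           H x y z = m 1 * f 1 (\<xi> 1) + m 2 * f 2 (\<xi> 2) - f 4 (\<xi> 4) \<and>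
           P x y z = - c0 * \<rho>0 * rr k l m 1 * f 1 (\<xi> 1) + c0 * \<rho>0 * rr k l m 2 * f 2 (\<xi> 2))
     \<longleftrightarrow> (F, G, H, P) = wave f" for f
    unfolding wave_def wave_comp_def sum_atLeastAtMost_1_4 pol_def phase_def Let_def
      \<alpha>_def \<beta>_def impedance_def
    by (simp add: fun_eq_iff) (auto simp: algebra_simps)
  show ?thesis
    unfolding I Z2_def mem_Collect_eq prod.case eq all4 by (simp add: comp_def)
qed

lemma bounded_comp_Z2: "I \<in> Z2 c0 \<rho>0 k l m \<Longrightarrow> \<forall>j<4. bounded_field (comp j I)"
  unfolding mem_Z2_iff by blast

definition "coord_bound = (\<Sum>i\<in>{1..4}. \<Sum>j<4. \<bar>coord_coeff i j\<bar>)"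

definition "pol_bound = (\<Sum>j<4. \<Sum>i\<in>{1..4}. \<bar>pol j i\<bar>)"

lemma pol_bound_mult_coord_bound_nonneg: "0 \<le> pol_bound * coord_bound"
  unfolding pol_bound_def coord_bound_def by (intro mult_nonneg_nonneg sum_nonneg) auto

lemma abs_coord_le:
  assumes "\<And>j. j < 4 \<Longrightarrow> \<bar>v j\<bar> \<le> M" and i: "i \<in> {1..4}"
  shows "\<bar>coord i v\<bar> \<le> coord_bound * M"
proof -
  have M: "M \<ge> 0" using assms(1)[of 0] by auto
  have "\<bar>coord i v\<bar> \<le> (\<Sum>j<4. \<bar>coord_coeff i j\<bar> * \<bar>v j\<bar>)"
    unfolding coord_eq_sum by (rule order_trans[OF sum_abs]) (simp add: abs_mult)
  also have "\<dots> \<le> (\<Sum>j<4. \<bar>coord_coeff i j\<bar>) * M"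
    unfolding sum_distrib_right by (intro sum_mono mult_left_mono assms(1)) auto
  also have "\<dots> \<le> coord_bound * M"
    unfolding coord_bound_def using i
    by (intro mult_right_mono M member_le_sum[where f = "\<lambda>i. \<Sum>j<4. \<bar>coord_coeff i j\<bar>"])
      (auto intro: sum_nonneg)
  finally show ?thesis .
qed

lemma abs_wave_comp_le:
  assumes "\<And>i a. i \<in> {1..4} \<Longrightarrow> \<bar>g i a\<bar> \<le> M" and j: "j < 4"
  shows "\<bar>wave_comp j g x y z\<bar> \<le> pol_bound * M"
proof -
  have M: "M \<ge> 0" using assms(1)[of 1] by force
  have "\<bar>wave_comp j g x y z\<bar> \<le> (\<Sum>i\<in>{1..4}. \<bar>pol j i\<bar> * \<bar>g i (phase i x y z)\<bar>)"
    unfolding wave_comp_def by (rule order_trans[OF sum_abs]) (simp add: abs_mult)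
  also have "\<dots> \<le> (\<Sum>i\<in>{1..4}. \<bar>pol j i\<bar>) * M"
    unfolding sum_distrib_right by (intro sum_mono mult_left_mono assms(1)) auto
  also have "\<dots> \<le> pol_bound * M"
    unfolding pol_bound_def using j
    by (intro mult_right_mono M member_le_sum[where f = "\<lambda>j. \<Sum>i\<in>{1..4}. \<bar>pol j i\<bar>"])
      (auto intro: sum_nonneg)
  finally show ?thesis .
qed

lemma abs_profile_le_znorm:
  assumes "\<forall>j<4. bounded_field (comp j (wave g))" and "i \<in> {1..4}"
  shows "\<bar>g i a\<bar> \<le> coord_bound * znorm (wave g)"
  using abs_coord_le[of "\<lambda>j. wave_comp j g (a / k i) 0 0", OF _ assms(2)]
    abs_comp_le_znorm[OF assms(1)] coord_wave[OF assms(2)]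
  by (simp add: comp_wave)

lemma bounded_wave:
  assumes "\<And>i a. i \<in> {1..4} \<Longrightarrow> \<bar>g i a\<bar> \<le> M"
  shows "\<forall>j<4. bounded_field (comp j (wave g))" and "znorm (wave g) \<le> pol_bound * M"
proof -
  have bound: "\<bar>comp j (wave g) x y z\<bar> \<le> pol_bound * M" if "j < 4" for j x y z
    using abs_wave_comp_le[OF assms that] that by (simp add: comp_wave)
  then show "\<forall>j<4. bounded_field (comp j (wave g))" by (blast intro: bounded_fieldI)
  show "znorm (wave g) \<le> pol_bound * M" by (rule znorm_le) (rule bound)
qed

section \<open>Existence\<close>

definition \<omega> :: "nat \<Rightarrow> real" where
  "\<omega> i = (if i = 1 then c0 * r 1 - U0 * k 1 else if i = 2 then - c0 * r 2 - U0 * k 2 else - U0 * k i)"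

definition evolve :: "(nat \<Rightarrow> real \<Rightarrow> real) \<Rightarrow> real \<Rightarrow> nat \<Rightarrow> real \<Rightarrow> real" where
  "evolve g t = (\<lambda>i a. g i (a + \<omega> i * t))"

lemma evolve_0 [simp]: "evolve g 0 = g"
  by (simp add: evolve_def)

lemma evolve_diff: "evolve (\<lambda>i a. g i a - g' i a) t = (\<lambda>i a. evolve g t i a - evolve g' t i a)"
  by (simp add: evolve_def)

lemma wave_comp_evolve: "wave_comp j (evolve g t) x y z = (\<Sum>i\<in>{1..4}. pol j i * g i (phase i x y z + \<omega> i * t))"
  by (simp add: wave_comp_def evolve_def)

lemma bounded_wave_evolve:
  assumes "\<forall>j<4. bounded_field (comp j (wave g))"
  shows "\<forall>j<4. bounded_field (comp j (wave (evolve g t)))"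
    and "znorm (wave (evolve g t)) \<le> pol_bound * coord_bound * znorm (wave g)"
  using bounded_wave[of "evolve g t" "coord_bound * znorm (wave g)"]
    abs_profile_le_znorm[OF assms] by (auto simp: evolve_def mult.assoc)

lemma C1_evolve:
  assumes "g i C1_differentiable_on UNIV"
  shows "evolve g t i C1_differentiable_on UNIV"
proof -
  note g' = C1_differentiable_on_UNIV_deriv[OF assms]
  have "((\<lambda>a. g i (a + \<omega> i * t)) has_real_derivative deriv (g i) (a + \<omega> i * t)) (at a)" for a
    by (auto intro!: derivative_eq_intros DERIV_compose_UNIV[OF g'(1)])
  moreover have "continuous_on UNIV (\<lambda>a. deriv (g i) (a + \<omega> i * t))"
    by (intro continuous_on_compose2[OF g'(2)] continuous_intros) auto
  ultimately show ?thesis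
    unfolding C1_differentiable_on_def evolve_def has_real_derivative_iff_has_vector_derivative
    by (intro exI[of _ "\<lambda>a. deriv (g i) (a + \<omega> i * t)"]) auto
qed

lemma wave_evolve_in_Z2:
  assumes "wave g \<in> Z2 c0 \<rho>0 k l m" and "\<forall>i\<in>{1..4}. g i C1_differentiable_on UNIV"
  shows "wave (evolve g t) \<in> Z2 c0 \<rho>0 k l m"
  using assms bounded_wave_evolve(1) C1_evolve unfolding mem_Z2_iff by blast

text \<open>\<open>P j a\<close> stands for the derivative of component \<open>j\<close> with respect to variable
  \<open>a\<close>, where \<open>x, y, z, t\<close> are numbered \<open>0, \<dots>, 3\<close> as in \<^const>\<open>C1_partials\<close>.\<close>

definition euler_eqs :: "(nat \<Rightarrow> nat \<Rightarrow> real) \<Rightarrow> bool" where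
  "euler_eqs P \<longleftrightarrow>
     P 0 3 + U0 * P 0 0 + 1 / \<rho>0 * P 3 0 = 0 \<and>
     P 1 3 + U0 * P 1 0 + 1 / \<rho>0 * P 3 1 = 0 \<and>
     P 2 3 + U0 * P 2 0 + 1 / \<rho>0 * P 3 2 = 0 \<and>
     P 3 3 + U0 * P 3 0 + \<rho>0 * c0\<^sup>2 * (P 0 0 + P 1 1 + P 2 2) = 0"

lemma is_solution_iff:
  "is_solution U0 c0 \<rho>0 Z T I u \<longleftrightarrow>
     u 0 = I \<and> (\<forall>t\<in>{0..T}. u t \<in> Z) \<and>
     (\<exists>D. (\<forall>j<4. C1_partials T (\<lambda>x y z t. comp j (u t) x y z) (D j)) \<and>
          (\<forall>x y z. \<forall>t\<in>{0..T}. euler_eqs (\<lambda>j a. D j a x y z t)))"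
  by (simp add: is_solution_def euler_eqs_def)

lemma solution_in_phase_space: "is_solution U0 c0 \<rho>0 Z T I u \<Longrightarrow> t \<in> {0..T} \<Longrightarrow> u t \<in> Z"
  by (simp add: is_solution_def)

lemma euler_eqs_lincomb:
  assumes "\<And>i. i \<in> A \<Longrightarrow> euler_eqs (P i)"
  shows "euler_eqs (\<lambda>j a. \<Sum>i\<in>A. c i * P i j a)"
proof -
  have "(\<Sum>i\<in>A. c i * (P i 0 3 + U0 * P i 0 0 + 1 / \<rho>0 * P i 3 0)) = 0"
    "(\<Sum>i\<in>A. c i * (P i 1 3 + U0 * P i 1 0 + 1 / \<rho>0 * P i 3 1)) = 0"
    "(\<Sum>i\<in>A. c i * (P i 2 3 + U0 * P i 2 0 + 1 / \<rho>0 * P i 3 2)) = 0"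
    "(\<Sum>i\<in>A. c i * (P i 3 3 + U0 * P i 3 0 + \<rho>0 * c0\<^sup>2 * (P i 0 0 + P i 1 1 + P i 2 2))) = 0"
    using assms by (auto simp: euler_eqs_def intro!: sum.neutral)
  then show ?thesis
    unfolding euler_eqs_def by (simp add: distrib_left sum.distrib sum_distrib_left algebra_simps)
qed

definition dir :: "nat \<Rightarrow> nat \<Rightarrow> real" where
  "dir a i = (if a = 0 then k i else if a = 1 then l i else if a = 2 then m i else \<omega> i)"

text \<open>If \<open>d i\<close> is the derivative of the \<open>i\<close>-th profile at the phase of a point, then
  \<open>wave_deriv d j a\<close> is the \<open>a\<close>-th partial derivative of component \<open>j\<close> of the evolving
  wave there.\<close>

definition wave_deriv :: "(nat \<Rightarrow> real) \<Rightarrow> nat \<Rightarrow> nat \<Rightarrow> real" where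
  "wave_deriv d j a = (\<Sum>i\<in>{1..4}. pol j i * dir a i * d i)"

lemma rr_square: "r i * r i = k i * k i + l i * l i + m i * m i"
  unfolding rr_def by (metis add_nonneg_nonneg power2_eq_square real_sqrt_pow2 zero_le_square)

lemma pol_eigen:
  assumes "i \<in> {1..4}"
  shows "euler_eqs (\<lambda>j a. pol j i * dir a i)"
proof -
  have "i = 1 \<or> i = 2 \<or> i = 3 \<or> i = 4" using assms by auto
  then show ?thesis
    using rho0_nonzero k_nonzero rr_square[of 1] rr_square[of 2]
    by (auto simp: euler_eqs_def pol_def dir_def \<omega>_def \<alpha>_def \<beta>_def impedance_def
        field_simps power2_eq_square)
qed

lemma euler_eqs_wave_deriv: "euler_eqs (wave_deriv d)"
proof -
  have "wave_deriv d = (\<lambda>j a. \<Sum>i\<in>{1..4}. d i * (pol j i * dir a i))"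
    by (simp add: wave_deriv_def fun_eq_iff ac_simps)
  then show ?thesis
    using euler_eqs_lincomb[of "{1..4}" "\<lambda>i j a. pol j i * dir a i" d] pol_eigen by simp
qed

lemma coord_wave_deriv: "i \<in> {1..4} \<Longrightarrow> coord i (\<lambda>j. wave_deriv d j a) = dir a i * d i"
  using coord_superposition[of i "\<lambda>i'. dir a i' * d i'"] by (simp add: wave_deriv_def mult.assoc)

lemma has_real_derivative_wave_comp:
  assumes "\<And>i a. i \<in> {1..4} \<Longrightarrow> (g i has_real_derivative g' i a) (at a)"
  shows "((\<lambda>s. wave_comp j g s y z) has_real_derivative wave_deriv (\<lambda>i. g' i (phase i x y z)) j 0) (at x)"
    and "((\<lambda>s. wave_comp j g x s z) has_real_derivative wave_deriv (\<lambda>i. g' i (phase i x y z)) j 1) (at y)"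
    and "((\<lambda>s. wave_comp j g x y s) has_real_derivative wave_deriv (\<lambda>i. g' i (phase i x y z)) j 2) (at z)"
  unfolding wave_comp_def wave_deriv_def dir_def phase_def
  by (auto intro!: derivative_eq_intros DERIV_compose_UNIV[OF assms] simp: mult_ac)

lemma has_real_derivative_wave_comp_evolve:
  assumes "\<And>i a. i \<in> {1..4} \<Longrightarrow> (g i has_real_derivative g' i a) (at a)"
  shows "((\<lambda>s. wave_comp j (evolve g s) x y z) has_real_derivative
           wave_deriv (\<lambda>i. g' i (phase i x y z + \<omega> i * t)) j 3) (at t within A)"
  unfolding wave_comp_evolve wave_deriv_def dir_def
  by (auto intro!: derivative_eq_intros DERIV_compose_UNIV[OF assms] simp: mult_ac)

lemma is_solution_wave_evolve:
  assumes Z2: "wave f \<in> Z2 c0 \<rho>0 k l m" and C1: "\<forall>i\<in>{1..4}. f i C1_differentiable_on UNIV"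
  shows "is_solution U0 c0 \<rho>0 (Z2 c0 \<rho>0 k l m) T (wave f) (\<lambda>t. wave (evolve f t))"
proof -
  define f' where "f' i = deriv (f i)" for i
  have f': "(f i has_real_derivative f' i a) (at a)" "continuous_on UNIV (f' i)" if "i \<in> {1..4}" for i a
    using C1_differentiable_on_UNIV_deriv C1 that unfolding f'_def by blast+
  have f_cont: "continuous_on UNIV (f i)" if "i \<in> {1..4}" for i
    by (rule continuous_at_imp_continuous_on) (auto intro: DERIV_isCont f'[OF that])
  define D where "D j a x y z t = wave_deriv (\<lambda>i. f' i (phase i x y z + \<omega> i * t)) j a" for j a x y z t
  have "C1_partials T (\<lambda>x y z t. comp j (wave (evolve f t)) x y z) (D j)" if "j < 4" for j
    unfolding C1_partials_def comp_wave[OF that]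
  proof (intro conjI allI ballI impI)
    fix x y z t
    have "(evolve f t i has_real_derivative evolve f' t i a) (at a)" if "i \<in> {1..4}" for i a
      unfolding evolve_def by (auto intro!: derivative_eq_intros DERIV_compose_UNIV[OF f'(1)[OF that]])
    from has_real_derivative_wave_comp[OF this]
    show "((\<lambda>s. wave_comp j (evolve f t) s y z) has_real_derivative D j 0 x y z t) (at x)"
      and "((\<lambda>s. wave_comp j (evolve f t) x s z) has_real_derivative D j 1 x y z t) (at y)"
      and "((\<lambda>s. wave_comp j (evolve f t) x y s) has_real_derivative D j 2 x y z t) (at z)"
      by (simp_all add: D_def evolve_def)
    show "((\<lambda>s. wave_comp j (evolve f s) x y z) has_real_derivative D j 3 x y z t) (at t within {0..T})"
      unfolding D_def by (rule has_real_derivative_wave_comp_evolve) (rule f')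
  next
    show "continuous_on (UNIV \<times> UNIV \<times> UNIV \<times> {0..T}) (\<lambda>(x, y, z, t). wave_comp j (evolve f t) x y z)"
      unfolding wave_comp_evolve phase_def by (rule continuous_on_sum_plane_waves) (rule f_cont)
    show "continuous_on (UNIV \<times> UNIV \<times> UNIV \<times> {0..T}) (\<lambda>(x, y, z, t). D j a x y z t)" for a
      unfolding D_def wave_deriv_def phase_def by (rule continuous_on_sum_plane_waves) (rule f')
  qed
  moreover have "wave (evolve f t) \<in> Z2 c0 \<rho>0 k l m" for t
    by (rule wave_evolve_in_Z2[OF Z2 C1])
  ultimately show ?thesis
    unfolding is_solution_iff by (intro conjI exI[of _ D]) (auto simp: D_def euler_eqs_wave_deriv)
qed

section \<open>Uniqueness\<close>

lemma euler_time_partials: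
  assumes "euler_eqs P" and "\<And>j a. j < 4 \<Longrightarrow> a < 3 \<Longrightarrow> P j a = wave_deriv d j a" and "j < 4"
  shows "P j 3 = wave_deriv d j 3"
proof -
  have "P 0 0 = wave_deriv d 0 0" "P 1 0 = wave_deriv d 1 0" "P 2 0 = wave_deriv d 2 0"
    "P 3 0 = wave_deriv d 3 0" "P 3 1 = wave_deriv d 3 1" "P 3 2 = wave_deriv d 3 2"
    "P 1 1 = wave_deriv d 1 1" "P 2 2 = wave_deriv d 2 2"
    using assms(2) by simp_all
  moreover have "j = 0 \<or> j = 1 \<or> j = 2 \<or> j = 3" using assms(3) by auto
  ultimately show ?thesis
    using assms(1) euler_eqs_wave_deriv[of d] unfolding euler_eqs_def by (elim disjE) simp_all
qed

lemma coord_time_partial_eq: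
  assumes "euler_eqs P" and "\<And>j a. j < 4 \<Longrightarrow> a < 3 \<Longrightarrow> P j a = wave_deriv d j a"
    and i: "i \<in> {1..4}"
  shows "coord i (\<lambda>j. P j 3) = \<omega> i / k i * coord i (\<lambda>j. P j 0)"
proof -
  have "coord i (\<lambda>j. P j 3) = coord i (\<lambda>j. wave_deriv d j 3)"
    using euler_time_partials[OF assms(1,2)] by (intro coord_cong) simp
  also have "\<dots> = \<omega> i * d i"
    using coord_wave_deriv[OF i] by (simp add: dir_def)
  moreover have "coord i (\<lambda>j. P j 0) = coord i (\<lambda>j. wave_deriv d j 0)"
    using assms(2) by (intro coord_cong) simp
  moreover have "\<dots> = k i * d i"
    using coord_wave_deriv[OF i] by (simp add: dir_def)
  ultimately show ?thesis using k_nonzero_at[OF i] by simp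
qed

lemma solution_spatial_partials:
  assumes "C1_partials T (\<lambda>x y z t. comp j (u t) x y z) (D j)" and "j < 4"
    and "t \<in> {0..T}" and "u t = wave g" and "\<forall>i\<in>{1..4}. g i C1_differentiable_on UNIV"
    and "a < 3"
  shows "D j a x y z t = wave_deriv (\<lambda>i. deriv (g i) (phase i x y z)) j a"
proof -
  have "((\<lambda>s. comp j (u t) s y z) has_real_derivative D j 0 x y z t) (at x)"
    "((\<lambda>s. comp j (u t) x s z) has_real_derivative D j 1 x y z t) (at y)"
    "((\<lambda>s. comp j (u t) x y s) has_real_derivative D j 2 x y z t) (at z)"
    using assms(1,3) unfolding C1_partials_def by blast+
  moreover have "comp j (u t) = wave_comp j g" using assms(2,4) comp_wave by simp
  ultimately have partials:
    "((\<lambda>s. wave_comp j g s y z) has_real_derivative D j 0 x y z t) (at x)"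
    "((\<lambda>s. wave_comp j g x s z) has_real_derivative D j 1 x y z t) (at y)"
    "((\<lambda>s. wave_comp j g x y s) has_real_derivative D j 2 x y z t) (at z)"
    by simp_all
  have "(g i has_real_derivative deriv (g i) s) (at s)" if "i \<in> {1..4}" for i s
    using C1_differentiable_on_UNIV_deriv(1) assms(5) that by blast
  note derivs = has_real_derivative_wave_comp[OF this]
  have "a = 0 \<or> a = 1 \<or> a = 2" using assms(6) by auto
  then show ?thesis
    using DERIV_unique[OF partials(1) derivs(1)] DERIV_unique[OF partials(2) derivs(2)]
      DERIV_unique[OF partials(3) derivs(3)]
    by auto
qed

lemma coord_transport:
  assumes C1: "\<forall>j<4. C1_partials T (\<lambda>x y z t. comp j (u t) x y z) (D j)"
    and i: "i \<in> {1..4}"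
    and speed: "\<And>x y z t. t \<in> {0..T} \<Longrightarrow>
      coord i (\<lambda>j. D j 3 x y z t) = \<omega> i / k i * coord i (\<lambda>j. D j 0 x y z t)"
    and t: "t \<in> {0..T}"
  shows "coord i (\<lambda>j. comp j (u t) (a / k i) 0 0) = coord i (\<lambda>j. comp j (u 0) ((a + \<omega> i * t) / k i) 0 0)"
proof -
  note axis = C1_partials_on_x_axis[OF C1[rule_format] k_nonzero_at[OF i]]
  define h where "h a t = coord i (\<lambda>j. comp j (u t) (a / k i) 0 0)" for a t
  define ha where "ha a t = coord i (\<lambda>j. D j 0 (a / k i) 0 0 t) / k i" for a t
  define ht where "ht a t = coord i (\<lambda>j. D j 3 (a / k i) 0 0 t)" for a t
  have "((\<lambda>a. h a t) has_real_derivative ha a t) (at a)" if "t \<in> {0..T}" for a t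
    using DERIV_coord[OF axis(1)[OF _ that]] unfolding h_def ha_def coord_divide_right .
  moreover have "((\<lambda>t. h a t) has_real_derivative ht a t) (at t within {0..T})" if "t \<in> {0..T}" for a t
    unfolding h_def ht_def by (intro DERIV_coord axis(2) that)
  moreover have "continuous_on (UNIV \<times> {0..T}) (\<lambda>(a, t). ht a t)"
    using continuous_on_coord[OF axis(3), where i = i] by (simp add: ht_def case_prod_unfold)
  moreover have "ht a t = \<omega> i * ha a t" if "t \<in> {0..T}" for a t
    using speed[OF that] by (simp add: ht_def ha_def)
  ultimately have "h a t = h (a + \<omega> i * t) 0"
    by (rule transport_eq_initial_value[OF _ _ _ _ t])
  then show ?thesis by (simp add: h_def)
qed

lemma solution_eq_wave_evolve:
  assumes sol: "is_solution U0 c0 \<rho>0 (Z2 c0 \<rho>0 k l m) T (wave f) u" and t: "t \<in> {0..T}"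
  shows "u t = wave (evolve f t)"
proof -
  obtain D where u0: "u 0 = wave f" and uZ: "\<forall>t\<in>{0..T}. u t \<in> Z2 c0 \<rho>0 k l m"
    and C1: "\<forall>j<4. C1_partials T (\<lambda>x y z t. comp j (u t) x y z) (D j)"
    and euler: "\<forall>x y z. \<forall>t\<in>{0..T}. euler_eqs (\<lambda>j a. D j a x y z t)"
    using sol unfolding is_solution_iff by blast
  have "\<forall>t\<in>{0..T}. \<exists>g. (\<forall>i\<in>{1..4}. g i C1_differentiable_on UNIV) \<and> u t = wave g"
    using uZ unfolding mem_Z2_iff by blast
  then obtain G where G: "\<And>t. t \<in> {0..T} \<Longrightarrow> (\<forall>i\<in>{1..4}. G t i C1_differentiable_on UNIV) \<and> u t = wave (G t)"
    by metis
  have "G t i a = f i (a + \<omega> i * t)" if i: "i \<in> {1..4}" for i a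
  proof -
    have "coord i (\<lambda>j. D j 3 x y z s) = \<omega> i / k i * coord i (\<lambda>j. D j 0 x y z s)"
      if "s \<in> {0..T}" for x y z s
    proof (rule coord_time_partial_eq[OF _ _ i])
      show "euler_eqs (\<lambda>j a. D j a x y z s)" using euler that by blast
      show "D j a x y z s = wave_deriv (\<lambda>i. deriv (G s i) (phase i x y z)) j a" if "j < 4" "a < 3" for j a
        by (rule solution_spatial_partials[where u = u]) (use C1 G \<open>s \<in> {0..T}\<close> that in auto)
    qed
    from coord_transport[OF C1 i this t, of a]
    show ?thesis using G[OF t] u0 by (simp add: coord_comp_wave coord_wave[OF i])
  qed
  then have "wave (G t) = wave (evolve f t)"
    by (intro wave_cong) (auto simp: evolve_def)
  then show ?thesis using G[OF t] by simp
qed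

section \<open>Continuous dependence and stability\<close>

lemma znorm_solution_le:
  assumes "I \<in> Z2 c0 \<rho>0 k l m" and "is_solution U0 c0 \<rho>0 (Z2 c0 \<rho>0 k l m) T I u" and "t \<in> {0..T}"
  shows "znorm (u t) \<le> pol_bound * coord_bound * znorm I"
proof -
  obtain f where bounded: "\<forall>j<4. bounded_field (comp j (wave f))" and I: "I = wave f"
    using assms(1) unfolding mem_Z2_iff by blast
  have "u t = wave (evolve f t)"
    using solution_eq_wave_evolve assms(2,3) unfolding I by blast
  then show ?thesis using bounded_wave_evolve(2)[OF bounded] by (simp add: I)
qed

lemma znorm_solution_diff_le:
  assumes "I \<in> Z2 c0 \<rho>0 k l m" and "J \<in> Z2 c0 \<rho>0 k l m"
    and "is_solution U0 c0 \<rho>0 (Z2 c0 \<rho>0 k l m) T I u" and "is_solution U0 c0 \<rho>0 (Z2 c0 \<rho>0 k l m) T J v"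
    and "t \<in> {0..T}"
  shows "znorm (zsub (u t) (v t)) \<le> pol_bound * coord_bound * znorm (zsub I J)"
proof -
  obtain f g where I: "I = wave f" and J: "J = wave g"
    using assms(1,2) unfolding mem_Z2_iff by blast
  have "u t = wave (evolve f t)" "v t = wave (evolve g t)"
    using solution_eq_wave_evolve assms(3-5) unfolding I J by blast+
  then have "zsub (u t) (v t) = wave (evolve (\<lambda>i a. f i a - g i a) t)"
    by (simp add: zsub_wave evolve_diff)
  moreover have "\<forall>j<4. bounded_field (comp j (wave (\<lambda>i a. f i a - g i a)))"
    using bounded_comp_zsub[OF bounded_comp_Z2 bounded_comp_Z2, OF assms(1,2)] by (simp add: I J zsub_wave)
  ultimately show ?thesis
    using bounded_wave_evolve(2) by (simp add: I J zsub_wave)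
qed

lemma well_posed_Z2: "well_posed U0 c0 \<rho>0 (Z2 c0 \<rho>0 k l m) T"
  unfolding well_posed_def
proof (intro conjI ballI allI impI)
  fix I assume "I \<in> Z2 c0 \<rho>0 k l m"
  then obtain f where "\<forall>i\<in>{1..4}. f i C1_differentiable_on UNIV" and "I = wave f"
    unfolding mem_Z2_iff by blast
  with \<open>I \<in> Z2 c0 \<rho>0 k l m\<close> show "\<exists>u. is_solution U0 c0 \<rho>0 (Z2 c0 \<rho>0 k l m) T I u"
    using is_solution_wave_evolve by blast
  fix u v t
  assume "is_solution U0 c0 \<rho>0 (Z2 c0 \<rho>0 k l m) T I u"
    and "is_solution U0 c0 \<rho>0 (Z2 c0 \<rho>0 k l m) T I v" and "t \<in> {0..T}"
  then have "u t = wave (evolve f t)" and "v t = wave (evolve f t)"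
    using solution_eq_wave_evolve unfolding \<open>I = wave f\<close> by blast+
  then show "u t = v t" by simp
next
  fix In I un u t
  assume In: "\<forall>n. In n \<in> Z2 c0 \<rho>0 k l m" and I: "I \<in> Z2 c0 \<rho>0 k l m"
    and lim: "(\<lambda>n. znorm (zsub (In n) I)) \<longlonglongrightarrow> 0"
    and sol_n: "\<forall>n. is_solution U0 c0 \<rho>0 (Z2 c0 \<rho>0 k l m) T (In n) (un n)"
    and sol: "is_solution U0 c0 \<rho>0 (Z2 c0 \<rho>0 k l m) T I u" and t: "t \<in> {0..T}"
  have bound: "norm (znorm (zsub (un n t) (u t))) \<le> pol_bound * coord_bound * znorm (zsub (In n) I)" for n
  proof -
    have "un n t \<in> Z2 c0 \<rho>0 k l m" "u t \<in> Z2 c0 \<rho>0 k l m"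
      using solution_in_phase_space sol_n sol t by blast+
    then have "0 \<le> znorm (zsub (un n t) (u t))"
      by (intro znorm_nonneg bounded_comp_zsub bounded_comp_Z2)
    with znorm_solution_diff_le[OF spec[OF In, of n] I spec[OF sol_n, of n] sol t] show ?thesis
      by simp
  qed
  show "(\<lambda>n. znorm (zsub (un n t) (u t))) \<longlonglongrightarrow> 0"
  proof (rule Lim_null_comparison)
    show "\<forall>\<^sub>F n in sequentially. norm (znorm (zsub (un n t) (u t))) \<le> pol_bound * coord_bound * znorm (zsub (In n) I)"
      using bound by (intro always_eventually allI)
    show "(\<lambda>n. pol_bound * coord_bound * znorm (zsub (In n) I)) \<longlonglongrightarrow> 0"
      using tendsto_mult_right_zero[OF lim, of "pol_bound * coord_bound"] by simp
  qed
qed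

lemma null_stable_Z2: "null_stable U0 c0 \<rho>0 (Z2 c0 \<rho>0 k l m)"
  unfolding null_stable_def
proof (intro conjI allI impI well_posed_Z2)
  fix \<epsilon> :: real assume "\<epsilon> > 0"
  define C where "C = pol_bound * coord_bound + 1"
  have "C > 0" using pol_bound_mult_coord_bound_nonneg by (simp add: C_def)
  show "\<exists>\<eta>>0. \<forall>I\<in>Z2 c0 \<rho>0 k l m. znorm I < \<eta> \<longrightarrow>
      (\<forall>t0>0. \<forall>u. is_solution U0 c0 \<rho>0 (Z2 c0 \<rho>0 k l m) t0 I u \<longrightarrow> (\<forall>t\<in>{0..t0}. znorm (u t) < \<epsilon>))"
  proof (intro exI[of _ "\<epsilon> / C"] conjI ballI allI impI)
    show "\<epsilon> / C > 0" using \<open>\<epsilon> > 0\<close> \<open>C > 0\<close> by simp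
    fix I t0 u t
    assume I: "I \<in> Z2 c0 \<rho>0 k l m" and small: "znorm I < \<epsilon> / C"
      and sol: "is_solution U0 c0 \<rho>0 (Z2 c0 \<rho>0 k l m) t0 I u" and t: "t \<in> {0..t0}"
    have "0 \<le> znorm I" using I by (intro znorm_nonneg bounded_comp_Z2)
    have "znorm (u t) \<le> pol_bound * coord_bound * znorm I"
      by (rule znorm_solution_le[OF I sol t])
    also have "\<dots> \<le> C * znorm I"
      using \<open>0 \<le> znorm I\<close> by (simp add: C_def distrib_right)
    also have "\<dots> < C * (\<epsilon> / C)"
      using small \<open>C > 0\<close> by (intro mult_strict_left_mono)
    finally show "znorm (u t) < \<epsilon>" using \<open>C > 0\<close> by simp
  qed
qed

end

theorem proposition21:
  fixes U0 c0 \<rho>0 :: real and k l m :: "nat \<Rightarrow> real"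
  assumes "U0 > 0" and "c0 > 0" and "\<rho>0 > 0"
    and "k 1 * k 2 * k 3 * k 4 \<noteq> 0"
    and "Delta c0 \<rho>0 k l m \<noteq> 0"
  shows "(\<forall>t0>0. well_posed U0 c0 \<rho>0 (Z2 c0 \<rho>0 k l m) t0) \<and> null_stable U0 c0 \<rho>0 (Z2 c0 \<rho>0 k l m)"
proof -
  interpret linearized_euler U0 c0 \<rho>0 k l m
    using assms(4,5) by unfold_locales
  show ?thesis using well_posed_Z2 null_stable_Z2 by blast
qed

end
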